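(* Let $\mathsf{KEM}_{\mathrm{eph}}$ be a $\delta_{\mathrm{eph}}$-correct key encapsulation mechanism and $\mathsf{KEM}_{\mathrm{stat}}$ a $\delta_{\mathrm{stat}}$-correct key encapsulation mechanism, and let $\Pi=(\mathsf{Init},\mathsf{SendM1},\mathsf{SendM2})$ be the authenticated key exchange protocol with QKD oracle described in the context, built from these KEMs, a key-derivation function $\mathsf{KDF}$ and two MACs $\mathsf{MAC}^{(qkd)},\mathsf{MAC}^{(pqc)}$. Then $\Pi$ is a $(\delta_{\mathrm{eph}}+2\delta_{\mathrm{stat}})$-correct AKE: for any two completed sessions $\mathit{sid}$ and $\mathit{sid}'$ of $\Pi$ that match each other and whose QKD key identifier has not been corrupted, $$\Pr[\text{session key of } \mathit{sid} \neq \text{session key of } \mathit{sid}'] \le \delta_{\mathrm{eph}}+2\delta_{\mathrm{stat}}.$$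
   Context: A KEM is a triple $(\mathsf{KeyGen},\mathsf{Encaps},\mathsf{Decaps})$; it is $\delta$-correct if for $(pk,sk)\leftarrow\mathsf{KeyGen}()$ and $(c,k)\leftarrow\mathsf{Encaps}(pk)$ one has $\Pr[\mathsf{Decaps}(sk,c)\neq k]\le\delta$. Parties $i$ hold static key pairs $(pk_i,sk_i)$ of $\mathsf{KEM}_{\mathrm{stat}}$. QKD oracle: for each session $\mathit{sid}$ the protocol may call $\mathsf{QKD\text{-}GET\text{-}KEY}(\mathit{sid},\ell_{qkd})$, which returns a key identifier $\mathit{kid}$ and a key $k_{qkd}$ of length $\ell_{qkd}$, and $\mathsf{QKD\text{-}GET\text{-}KEY\text{-}WITH\text{-}ID}(\mathit{sid},\mathit{kid})$, which returns the key stored under $\mathit{kid}$ for the corresponding peer, or $\bot$. A key identifier is "corrupted" if the adversary has overridden the key stored under it; for an uncorrupted identifier both calls give the same key. Protocol $\Pi$ (destructuring assignments mean: parse, and abort the session on wrong format; $(x\|y):=k$ splits $k$ so that $x$ has the length of a MAC key and $y$ is the rest): $\mathsf{Combine}(i_I,i_R,t,k_{qkd},k_{pqc})$: $(k_{qkd,m}\|k_{qkd,s}):=k_{qkd}$; $(k_{pqc,m}\|k_{pqc,s}):=k_{pqc}$; $k_{sess}:=k_{qkd,s}\oplus k_{pqc,s}$; $\tau_1:=\mathsf{MAC}^{(qkd)}_{k_{qkd,m}}((t,i_I,i_R))$; $\tau_2:=\mathsf{MAC}^{(pqc)}_{k_{pqc,m}}((t,\tau_1,i_I,i_R))$; return $(k_{sess},\tau_1,\tau_2)$.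 $\mathsf{Init}(pk_j)$ (initiator, peer $j$): $(c_b,k_b)\leftarrow\mathsf{Encaps}_{\mathrm{stat}}(pk_j)$; $(pk_e,sk_e)\leftarrow\mathsf{KeyGen}_{\mathrm{eph}}()$; $m_1:=(c_b,pk_e)$; state $s:=(k_b,sk_e,m_1)$; output $(m_1,s)$. $\mathsf{SendM1}(i,sk_i,j,pk_j,m_1)$ (responder $i$, peer $j$, session $\mathit{sid}$): $(c_b,pk_e):=m_1$; $k_b':=\mathsf{Decaps}_{\mathrm{stat}}(sk_i,c_b)$; $(c_a,k_a)\leftarrow\mathsf{Encaps}_{\mathrm{stat}}(pk_j)$; $(c_e,k_e)\leftarrow\mathsf{Encaps}_{\mathrm{eph}}(pk_e)$; $k_{pqc}:=\mathsf{KDF}(k_b',k_a,k_e)$; $(\mathit{kid},k_{qkd})\leftarrow\mathsf{QKD\text{-}GET\text{-}KEY}(\mathit{sid},\ell_{qkd})$; $t:=(m_1,(c_a,c_e,\mathit{kid}))$; $(k_{sess},\tau_1,\tau_2):=\mathsf{Combine}(j,i,t,k_{qkd},k_{pqc})$; $m_2:=(c_a,c_e,\mathit{kid},\tau_1,\tau_2)$; output $(m_2,k_{sess})$. $\mathsf{SendM2}(i,sk_i,j,s,m_2)$ (initiator $i$, peer $j$, session $\mathit{sid}$): $(c_a,c_e,\mathit{kid},\tau_1',\tau_2'):=m_2$; $(k_b,sk_e,m_1):=s$; $k_a':=\mathsf{Decaps}_{\mathrm{stat}}(sk_i,c_a)$; $k_e':=\mathsf{Decaps}_{\mathrm{eph}}(sk_e,c_e)$;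 $k_{pqc}:=\mathsf{KDF}(k_b,k_a',k_e')$; $k_{qkd}:=\mathsf{QKD\text{-}GET\text{-}KEY\text{-}WITH\text{-}ID}(\mathit{sid},\mathit{kid})$, abort if $\bot$; $t:=(m_1,(c_a,c_e,\mathit{kid}))$; $(k_{sess},\tau_1,\tau_2):=\mathsf{Combine}(i,j,t,k_{qkd},k_{pqc})$; abort if $\tau_1\ne\tau_1'$ or $\tau_2\neq\tau_2'$; output $k_{sess}$. Two sessions match if they have opposite roles (one initiator, one responder), each one's owner is the other's peer, and they have the same transcript $(m_1,m_2)$. *)

theory Defs
  imports "HOL-Probability.Probability"
begin

record ('pk, 'sk, 'c, 'k) kem =
  kem_keygen :: "('pk \<times> 'sk) pmf"
  kem_encaps :: "'pk \<Rightarrow> ('c \<times> 'k) pmf"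
  kem_decaps :: "'sk \<Rightarrow> 'c \<Rightarrow> 'k"

definition kem_correct :: "real \<Rightarrow> ('pk, 'sk, 'c, 'k) kem \<Rightarrow> bool" where
  "kem_correct \<delta> K \<longleftrightarrow>
     measure_pmf.prob
       (bind_pmf (kem_keygen K) (\<lambda>(pk, sk).
        bind_pmf (kem_encaps K pk) (\<lambda>(c, k).
        return_pmf (kem_decaps K sk c \<noteq> k))))
       {True} \<le> \<delta>"

text \<open>Destructuring (x || y) := k with x of length n: fails (None) on wrong format.\<close>
definition split_key :: "nat \<Rightarrow> bool list \<Rightarrow> (bool list \<times> bool list) option" where
  "split_key n k = (if length k < n then None else Some (take n k, drop n k))"

definition xor_bits :: "bool list \<Rightarrow> bool list \<Rightarrow> bool list" where
  "xor_bits x y = map2 (\<noteq>) x y"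

text \<open>Combine. nq / np are the key lengths of MAC^(qkd) and MAC^(pqc).\<close>
definition combine ::
  "nat \<Rightarrow> nat \<Rightarrow> (bool list \<Rightarrow> ('t \<times> 'id \<times> 'id) \<Rightarrow> 'tg1)
   \<Rightarrow> (bool list \<Rightarrow> ('t \<times> 'tg1 \<times> 'id \<times> 'id) \<Rightarrow> 'tg2)
   \<Rightarrow> 'id \<Rightarrow> 'id \<Rightarrow> 't \<Rightarrow> bool list \<Rightarrow> bool list \<Rightarrow> (bool list \<times> 'tg1 \<times> 'tg2) option" where
  "combine nq np macq macp iI iR t kqkd kpqc =
     (case (split_key nq kqkd, split_key np kpqc) of
        (Some (kqm, kqs), Some (kpm, kps)) \<Rightarrow>
          (let \<tau>1 = macq kqm (t, iI, iR);
               \<tau>2 = macp kpm (t, \<tau>1, iI, iR)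
           in Some (xor_bits kqs kps, \<tau>1, \<tau>2))
      | _ \<Rightarrow> None)"

definition proto_init ::
  "('pks, 'sks, 'cs, 'ks) kem \<Rightarrow> ('pke, 'ske, 'ce, 'ke) kem \<Rightarrow> 'pks
   \<Rightarrow> (('cs \<times> 'pke) \<times> ('ks \<times> 'ske \<times> ('cs \<times> 'pke))) pmf" where
  "proto_init Ks Ke pkj =
     bind_pmf (kem_encaps Ks pkj) (\<lambda>(cb, kb).
     bind_pmf (kem_keygen Ke) (\<lambda>(pke, ske).
     return_pmf ((cb, pke), (kb, ske, (cb, pke)))))"

text \<open>The QKD call QKD-GET-KEY is modelled by the distribution qkd of (kid, k_qkd).
  Output None = abort; otherwise Some (m2, k_sess).\<close>
definition proto_sendM1 ::
  "('pks, 'sks, 'cs, 'ks) kem \<Rightarrow> ('pke, 'ske, 'ce, 'ke) kem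
   \<Rightarrow> ('ks \<Rightarrow> 'ks \<Rightarrow> 'ke \<Rightarrow> bool list)
   \<Rightarrow> nat \<Rightarrow> nat
   \<Rightarrow> (bool list \<Rightarrow> ((('cs \<times> 'pke) \<times> ('cs \<times> 'ce \<times> 'kid)) \<times> 'id \<times> 'id) \<Rightarrow> 'tg1)
   \<Rightarrow> (bool list \<Rightarrow> ((('cs \<times> 'pke) \<times> ('cs \<times> 'ce \<times> 'kid)) \<times> 'tg1 \<times> 'id \<times> 'id) \<Rightarrow> 'tg2)
   \<Rightarrow> ('kid \<times> bool list) pmf
   \<Rightarrow> 'id \<Rightarrow> 'sks \<Rightarrow> 'id \<Rightarrow> 'pks \<Rightarrow> ('cs \<times> 'pke)
   \<Rightarrow> ((('cs \<times> 'ce \<times> 'kid \<times> 'tg1 \<times> 'tg2) \<times> bool list) option) pmf" where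
  "proto_sendM1 Ks Ke KDF nq np macq macp qkd i ski j pkj m1 =
     (case m1 of (cb, pke) \<Rightarrow>
      let kb' = kem_decaps Ks ski cb in
      bind_pmf (kem_encaps Ks pkj) (\<lambda>(ca, ka).
      bind_pmf (kem_encaps Ke pke) (\<lambda>(ce, ke).
      let kpqc = KDF kb' ka ke in
      bind_pmf qkd (\<lambda>(kid, kqkd).
      let t = (m1, (ca, ce, kid)) in
      return_pmf
        (case combine nq np macq macp j i t kqkd kpqc of
           None \<Rightarrow> None
         | Some (ksess, \<tau>1, \<tau>2) \<Rightarrow> Some ((ca, ce, kid, \<tau>1, \<tau>2), ksess))))))"

text \<open>SendM2 (initiator i with secret key sk_i, peer j, state s). The call
  QKD-GET-KEY-WITH-ID is modelled by the lookup function qkd_get (None = bottom).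
  Output None = abort; otherwise Some k_sess.\<close>
definition proto_sendM2 ::
  "('pks, 'sks, 'cs, 'ks) kem \<Rightarrow> ('pke, 'ske, 'ce, 'ke) kem
   \<Rightarrow> ('ks \<Rightarrow> 'ks \<Rightarrow> 'ke \<Rightarrow> bool list)
   \<Rightarrow> nat \<Rightarrow> nat
   \<Rightarrow> (bool list \<Rightarrow> ((('cs \<times> 'pke) \<times> ('cs \<times> 'ce \<times> 'kid)) \<times> 'id \<times> 'id) \<Rightarrow> 'tg1)
   \<Rightarrow> (bool list \<Rightarrow> ((('cs \<times> 'pke) \<times> ('cs \<times> 'ce \<times> 'kid)) \<times> 'tg1 \<times> 'id \<times> 'id) \<Rightarrow> 'tg2)
   \<Rightarrow> ('kid \<Rightarrow> bool list option)
   \<Rightarrow> 'id \<Rightarrow> 'sks \<Rightarrow> 'id \<Rightarrow> ('ks \<times> 'ske \<times> ('cs \<times> 'pke))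
   \<Rightarrow> ('cs \<times> 'ce \<times> 'kid \<times> 'tg1 \<times> 'tg2) \<Rightarrow> bool list option" where
  "proto_sendM2 Ks Ke KDF nq np macq macp qkd_get i ski j s m2 =
     (case m2 of (ca, ce, kid, \<tau>1', \<tau>2') \<Rightarrow>
      case s of (kb, ske, m1) \<Rightarrow>
      let ka' = kem_decaps Ks ski ca;
          ke' = kem_decaps Ke ske ce;
          kpqc = KDF kb ka' ke'
      in case qkd_get kid of
           None \<Rightarrow> None
         | Some kqkd \<Rightarrow>
             (let t = (m1, (ca, ce, kid)) in
              case combine nq np macq macp i j t kqkd kpqc of
                None \<Rightarrow> None
              | Some (ksess, \<tau>1, \<tau>2) \<Rightarrow>
                  if \<tau>1 \<noteq> \<tau>1' \<or> \<tau>2 \<noteq> \<tau>2' then None else Some ksess))"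

text \<open>The initiator runs Init(pk_j); the responder receives exactly m1 and runs SendM1;
  the initiator receives exactly m2 and runs SendM2 (so the two sessions have the
  same transcript (m1,m2), i.e. match).\<close>
definition ake_mismatch_exp ::
  "('pks, 'sks, 'cs, 'ks) kem \<Rightarrow> ('pke, 'ske, 'ce, 'ke) kem
   \<Rightarrow> ('ks \<Rightarrow> 'ks \<Rightarrow> 'ke \<Rightarrow> bool list)
   \<Rightarrow> nat \<Rightarrow> nat
   \<Rightarrow> (bool list \<Rightarrow> ((('cs \<times> 'pke) \<times> ('cs \<times> 'ce \<times> 'kid)) \<times> 'id \<times> 'id) \<Rightarrow> 'tg1)
   \<Rightarrow> (bool list \<Rightarrow> ((('cs \<times> 'pke) \<times> ('cs \<times> 'ce \<times> 'kid)) \<times> 'tg1 \<times> 'id \<times> 'id) \<Rightarrow> 'tg2)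
   \<Rightarrow> ('kid \<times> bool list) pmf \<Rightarrow> ('kid \<Rightarrow> bool list option)
   \<Rightarrow> 'id \<Rightarrow> 'id \<Rightarrow> bool pmf" where
  "ake_mismatch_exp Ks Ke KDF nq np macq macp qkd qkd_get i j =
     bind_pmf (kem_keygen Ks) (\<lambda>(pki, ski).
     bind_pmf (kem_keygen Ks) (\<lambda>(pkj, skj).
     bind_pmf (proto_init Ks Ke pkj) (\<lambda>(m1, s).
     bind_pmf (proto_sendM1 Ks Ke KDF nq np macq macp qkd j skj i pki m1) (\<lambda>r.
     return_pmf
       (case r of
          None \<Rightarrow> False
        | Some (m2, ksess) \<Rightarrow>
            proto_sendM2 Ks Ke KDF nq np macq macp qkd_get i ski j s m2 \<noteq> Some ksess)))))"

end

theory Submission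
  imports Defs
begin

text \<open>If all three decapsulations succeed (the responder's of \<open>c_b\<close>, the initiator's of
  \<open>c_a\<close> and of \<open>c_e\<close>), both parties feed identical inputs into \<open>KDF\<close> and \<open>Combine\<close>;
  with an uncorrupted QKD key identifier the initiator then recomputes the responder's
  tags and session key exactly. So a mismatch forces one of three decapsulation failures.
  In the experiment, each failure event is distributed exactly as the failure in the
  correctness game of the corresponding KEM, and the union bound gives
  \<open>\<delta>eph + 2 \<delta>stat\<close>.\<close>

definition kem_failure :: "('pk, 'sk, 'c, 'k) kem \<Rightarrow> bool pmf" where
  "kem_failure K =
     bind_pmf (kem_keygen K) (\<lambda>(pk, sk).
     bind_pmf (kem_encaps K pk) (\<lambda>(c, k).
     return_pmf (kem_decaps K sk c \<noteq> k)))"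

lemma kem_correct_iff_failure_prob:
  "kem_correct \<delta> K \<longleftrightarrow> measure_pmf.prob (kem_failure K) {True} \<le> \<delta>"
  unfolding kem_correct_def kem_failure_def ..

lemma measure_pmf_prob_le_sum3:
  assumes "\<And>x. x \<in> set_pmf p \<Longrightarrow> P x \<Longrightarrow> A x \<or> B x \<or> C x"
  shows "measure_pmf.prob p {x. P x}
           \<le> measure_pmf.prob p {x. A x} + measure_pmf.prob p {x. B x} + measure_pmf.prob p {x. C x}"
proof -
  have "measure_pmf.prob p {x. P x} \<le> measure_pmf.prob p ({x. A x} \<union> {x. B x} \<union> {x. C x})"
    using assms by (intro measure_pmf.finite_measure_mono_AE) (auto simp: AE_measure_pmf_iff)
  also have "\<dots> \<le> measure_pmf.prob p ({x. A x} \<union> {x. B x}) + measure_pmf.prob p {x. C x}"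
    by (rule measure_Un_le) auto
  also have "measure_pmf.prob p ({x. A x} \<union> {x. B x})
               \<le> measure_pmf.prob p {x. A x} + measure_pmf.prob p {x. B x}"
    by (rule measure_Un_le) auto
  finally show ?thesis by simp
qed

lemma measure_pmf_prob_Collect_eq_map:
  "measure_pmf.prob p {x. P x} = measure_pmf.prob (map_pmf P p) {True}"
  by (simp add: vimage_def)

lemma proto_sendM2_eq_responder_key:
  assumes "qkd_get kid = Some kqkd"
    and "combine nq np macq macp i j ((cb, pke), (ca, ce, kid)) kqkd (KDF kb ka ke)
           = Some (ksess, \<tau>1, \<tau>2)"
    and "kem_decaps Ks ski ca = ka" and "kem_decaps Ke ske ce = ke"
  shows "proto_sendM2 Ks Ke KDF nq np macq macp qkd_get i ski j (kb, ske, (cb, pke))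
           (ca, ce, kid, \<tau>1, \<tau>2) = Some ksess"
  using assms unfolding proto_sendM2_def by (simp add: Let_def)

text \<open>The experiment \<open>ake_mismatch_exp\<close> with \<open>Init\<close> and \<open>SendM1\<close> inlined, additionally
  recording which of the three decapsulations failed.\<close>

definition ake_failure_exp ::
  "('pks, 'sks, 'cs, 'ks) kem \<Rightarrow> ('pke, 'ske, 'ce, 'ke) kem
   \<Rightarrow> ('ks \<Rightarrow> 'ks \<Rightarrow> 'ke \<Rightarrow> bool list)
   \<Rightarrow> nat \<Rightarrow> nat
   \<Rightarrow> (bool list \<Rightarrow> ((('cs \<times> 'pke) \<times> ('cs \<times> 'ce \<times> 'kid)) \<times> 'id \<times> 'id) \<Rightarrow> 'tg1)
   \<Rightarrow> (bool list \<Rightarrow> ((('cs \<times> 'pke) \<times> ('cs \<times> 'ce \<times> 'kid)) \<times> 'tg1 \<times> 'id \<times> 'id) \<Rightarrow> 'tg2)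
   \<Rightarrow> ('kid \<times> bool list) pmf \<Rightarrow> ('kid \<Rightarrow> bool list option)
   \<Rightarrow> 'id \<Rightarrow> 'id \<Rightarrow> ((bool \<times> bool \<times> bool) \<times> bool) pmf" where
  "ake_failure_exp Ks Ke KDF nq np macq macp qkd qkd_get i j =
     bind_pmf (kem_keygen Ks) (\<lambda>(pki, ski).
     bind_pmf (kem_keygen Ks) (\<lambda>(pkj, skj).
     bind_pmf (kem_encaps Ks pkj) (\<lambda>(cb, kb).
     bind_pmf (kem_keygen Ke) (\<lambda>(pke, ske).
     bind_pmf (kem_encaps Ks pki) (\<lambda>(ca, ka).
     bind_pmf (kem_encaps Ke pke) (\<lambda>(ce, ke).
     bind_pmf qkd (\<lambda>(kid, kqkd).
     return_pmf
       ((kem_decaps Ks skj cb \<noteq> kb, kem_decaps Ks ski ca \<noteq> ka, kem_decaps Ke ske ce \<noteq> ke),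
        (case combine nq np macq macp i j ((cb, pke), (ca, ce, kid)) kqkd
                (KDF (kem_decaps Ks skj cb) ka ke) of
           None \<Rightarrow> False
         | Some (ksess, \<tau>1, \<tau>2) \<Rightarrow>
             proto_sendM2 Ks Ke KDF nq np macq macp qkd_get i ski j (kb, ske, (cb, pke))
               (ca, ce, kid, \<tau>1, \<tau>2) \<noteq> Some ksess)))))))))"

lemma case_option_case_option_bool:
  "(case (case x of None \<Rightarrow> None | Some y \<Rightarrow> f y) of None \<Rightarrow> False | Some z \<Rightarrow> g z)
     = (case x of None \<Rightarrow> False | Some y \<Rightarrow> (case f y of None \<Rightarrow> False | Some z \<Rightarrow> g z))"
  by (cases x) auto

lemma map_snd_ake_failure_exp:
  "map_pmf snd (ake_failure_exp Ks Ke KDF nq np macq macp qkd qkd_get i j)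
     = ake_mismatch_exp Ks Ke KDF nq np macq macp qkd qkd_get i j"
  unfolding ake_mismatch_exp_def ake_failure_exp_def proto_init_def proto_sendM1_def
  by (simp add: map_bind_pmf bind_assoc_pmf bind_return_pmf split_def Let_def
      case_option_case_option_bool cong: option.case_cong)

lemma ake_failure_exp_marginals:
  "map_pmf (\<lambda>x. fst (fst x)) (ake_failure_exp Ks Ke KDF nq np macq macp qkd qkd_get i j)
     = kem_failure Ks"
  "map_pmf (\<lambda>x. fst (snd (fst x))) (ake_failure_exp Ks Ke KDF nq np macq macp qkd qkd_get i j)
     = kem_failure Ks"
  "map_pmf (\<lambda>x. snd (snd (fst x))) (ake_failure_exp Ks Ke KDF nq np macq macp qkd qkd_get i j)
     = kem_failure Ke"
  unfolding ake_failure_exp_def kem_failure_def by (simp_all add: map_bind_pmf split_def)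

lemma ake_mismatch_imp_decaps_failure:
  assumes "\<forall>(kid, k) \<in> set_pmf qkd. qkd_get kid = Some k"
    and "((fb, fa, fe), mismatch) \<in> set_pmf (ake_failure_exp Ks Ke KDF nq np macq macp qkd qkd_get i j)"
    and mismatch
  shows "fb \<or> fa \<or> fe"
proof -
  have uncorrupted: "qkd_get kid = Some kqkd" if "(kid, kqkd) \<in> set_pmf qkd" for kid kqkd
    using assms(1) that by auto
  show ?thesis
    using assms(2,3) unfolding ake_failure_exp_def
    by (clarsimp simp: split_def split: option.split_asm)
      (metis uncorrupted proto_sendM2_eq_responder_key)
qed

theorem mainTheorem1:
  fixes Ks :: "('pks, 'sks, 'cs, 'ks) kem"
    and Ke :: "('pke, 'ske, 'ce, 'ke) kem"
    and KDF :: "'ks \<Rightarrow> 'ks \<Rightarrow> 'ke \<Rightarrow> bool list"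
    and nq np :: nat
    and macq :: "bool list \<Rightarrow> ((('cs \<times> 'pke) \<times> ('cs \<times> 'ce \<times> 'kid)) \<times> 'id \<times> 'id) \<Rightarrow> 'tg1"
    and macp :: "bool list \<Rightarrow> ((('cs \<times> 'pke) \<times> ('cs \<times> 'ce \<times> 'kid)) \<times> 'tg1 \<times> 'id \<times> 'id) \<Rightarrow> 'tg2"
    and qkd :: "('kid \<times> bool list) pmf"
    and qkd_get :: "'kid \<Rightarrow> bool list option"
    and i j :: 'id
    and \<delta>eph \<delta>stat :: real
  assumes "kem_correct \<delta>eph Ke"
    and "kem_correct \<delta>stat Ks"
    and "\<forall>(kid, k) \<in> set_pmf qkd. qkd_get kid = Some k"
  shows "measure_pmf.prob (ake_mismatch_exp Ks Ke KDF nq np macq macp qkd qkd_get i j) {True}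
           \<le> \<delta>eph + 2 * \<delta>stat"
proof -
  let ?X = "ake_failure_exp Ks Ke KDF nq np macq macp qkd qkd_get i j"
  have "measure_pmf.prob (ake_mismatch_exp Ks Ke KDF nq np macq macp qkd qkd_get i j) {True}
          = measure_pmf.prob ?X {x. snd x}"
    by (simp only: measure_pmf_prob_Collect_eq_map map_snd_ake_failure_exp)
  also have "\<dots> \<le> measure_pmf.prob ?X {x. fst (fst x)} + measure_pmf.prob ?X {x. fst (snd (fst x))}
                  + measure_pmf.prob ?X {x. snd (snd (fst x))}"
    by (rule measure_pmf_prob_le_sum3) (use ake_mismatch_imp_decaps_failure[OF assms(3)] in force)
  also have "\<dots> = measure_pmf.prob (kem_failure Ks) {True} + measure_pmf.prob (kem_failure Ks) {True}
                  + measure_pmf.prob (kem_failure Ke) {True}"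
    by (simp only: measure_pmf_prob_Collect_eq_map ake_failure_exp_marginals)
  also have "\<dots> \<le> \<delta>stat + \<delta>stat + \<delta>eph"
    using assms(1,2) by (intro add_mono) (simp_all add: kem_correct_iff_failure_prob)
  finally show ?thesis by simp
qed

end
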